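(* The Shapley–Shubik index satisfies the strong minimum-power blocker postulate. For every SVG $\mathcal{G}=(N,\mathcal{W})$: (1) if $S\in\mathcal{W}$ and $b\in S$ is a YES-blocker, then $SS_b\ge 1/|S|$; (2) if $T\notin\mathcal{W}$ and $b\in N\setminus T$ is a NO-blocker, then $SS_b\ge 1/|N\setminus T|$. (Here $1$ is the Shapley–Shubik index of a dictator in a dictator-rule game.)
   Context: A simple voting game (SVG) is a pair $\mathcal{G}=(N,\mathcal{W})$ with $N$ a nonempty finite set of $n$ players and $\mathcal{W}\subseteq 2^N$ monotone, $\emptyset\notin\mathcal{W}$, $N\in\mathcal{W}$. Player $k$ is YES-decisive in $S$ if $k\in S\in\mathcal{W}$ and $S\setminus\{k\}\notin\mathcal{W}$. The Shapley–Shubik index is $$SS_k=\sum_{S:\ k\text{ YES-decisive in }S}\frac{(|S|-1)!\,(n-|S|)!}{n!}.$$ Blockers: $b$ is a YES-blocker if $b\in S$ for all $S\in\mathcal{W}$, and a NO-blocker if $b\notin S$ for all $S\notin\mathcal{W}$. *)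

theory Defs
  imports Complex_Main
begin

definition svg :: "'a set \<Rightarrow> 'a set set \<Rightarrow> bool" where
  "svg N W \<longleftrightarrow> finite N \<and> N \<noteq> {} \<and> W \<subseteq> Pow N \<and>
     (\<forall>S T. S \<in> W \<and> S \<subseteq> T \<and> T \<subseteq> N \<longrightarrow> T \<in> W) \<and>
     {} \<notin> W \<and> N \<in> W"

definition yes_decisive :: "'a set set \<Rightarrow> 'a \<Rightarrow> 'a set \<Rightarrow> bool" where
  "yes_decisive W k S \<longleftrightarrow> k \<in> S \<and> S \<in> W \<and> S - {k} \<notin> W"

definition shapley_shubik :: "'a set \<Rightarrow> 'a set set \<Rightarrow> 'a \<Rightarrow> real" where
  "shapley_shubik N W k =
     (\<Sum>S \<in> {S. S \<subseteq> N \<and> yes_decisive W k S}.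
        fact (card S - 1) * fact (card N - card S) / fact (card N))"

definition yes_blocker :: "'a set set \<Rightarrow> 'a \<Rightarrow> bool" where
  "yes_blocker W b \<longleftrightarrow> (\<forall>S \<in> W. b \<in> S)"

definition no_blocker :: "'a set \<Rightarrow> 'a set set \<Rightarrow> 'a \<Rightarrow> bool" where
  "no_blocker N W b \<longleftrightarrow> (\<forall>S. S \<subseteq> N \<and> S \<notin> W \<longrightarrow> b \<notin> S)"

end

theory Submission imports Defs begin

text \<open>Read the Shapley--Shubik weight of a coalition R containing b as the probability that,
  in a uniformly random ordering of N, the players preceding b are exactly those of R - {b}.
  For a YES-blocker b in a winning S, b is decisive in every coalition containing S, and the
  probability that all of S - {b} precedes b is 1/|S|. For a NO-blocker b outside a losing T,
  b is decisive in every coalition of the form {b} \<union> U with U \<subseteq> T, and the probability that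
  b precedes all of N - T - {b} is 1/|N - T|. Both sums are evaluated by the hockey-stick
  identity.\<close>

definition ss_weight :: "nat \<Rightarrow> nat \<Rightarrow> real" where
  "ss_weight n s = fact (s - 1) * fact (n - s) / fact n"

lemma sum_Pow_card:
  assumes "finite M"
  shows "(\<Sum>U\<in>Pow M. h (card U)) = (\<Sum>k\<le>card M. of_nat (card M choose k) * (h k :: 'b::comm_semiring_1))"
proof -
  have "(\<Sum>U\<in>Pow M. h (card U)) = (\<Sum>k\<le>card M. \<Sum>U\<in>{U. U \<in> Pow M \<and> card U = k}. h (card U))"
    by (rule sum.group[symmetric]) (use assms in \<open>auto intro: card_mono\<close>)
  also have "\<dots> = (\<Sum>k\<le>card M. of_nat (card M choose k) * h k)"
    using n_subsets[OF assms] by (intro sum.cong) auto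
  finally show ?thesis .
qed

lemma sum_binomial_fact_shift:
  "(\<Sum>k\<le>q. of_nat (q choose k) * fact (r + k) * fact (q - k) :: 'a::field_char_0)
     = fact (q + r + 1) / of_nat (r + 1)"
proof -
  have summand: "of_nat (q choose k) * fact (r + k) * fact (q - k)
      = (fact q * fact r :: 'a) * of_nat ((r + k) choose k)" if "k \<le> q" for k
    using that by (simp add: binomial_fact field_simps)
  have "Suc (r + q) - q = Suc r" by simp
  then have "fact q * fact (Suc r) * (Suc (r + q) choose q) = fact (Suc (r + q))"
    using binomial_fact_lemma[of q "Suc (r + q)"] by simp
  then have "fact q * fact (Suc r) * of_nat (Suc (r + q) choose q) = (fact (Suc (r + q)) :: 'a)"
    by (metis of_nat_fact of_nat_mult)
  then have "fact q * fact r * of_nat (Suc (r + q) choose q) * of_nat (r + 1) = (fact (q + r + 1) :: 'a)"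
    by (simp add: fact_Suc[of r] add.commute mult_ac)
  moreover have "of_nat (r + 1) \<noteq> (0::'a)"
    by (metis add_eq_0_iff_both_eq_0 of_nat_eq_0_iff one_neq_zero)
  ultimately show ?thesis
    by (simp add: summand sum_distrib_left of_nat_sum eq_divide_eq flip: sum_choose_lower)
qed

lemma ss_weight_sum_supersets:
  assumes "a \<ge> 1"
  shows "(\<Sum>k\<le>q. of_nat (q choose k) * ss_weight (a + q) (a + k)) = 1 / real a"
proof -
  have "(\<Sum>k\<le>q. of_nat (q choose k) * ss_weight (a + q) (a + k))
      = (\<Sum>k\<le>q. of_nat (q choose k) * fact (a - 1 + k) * fact (q - k)) / fact (a + q)"
    using assms by (simp add: ss_weight_def sum_divide_distrib Suc_diff_le mult.assoc)
  also have "\<dots> = fact (q + (a - 1) + 1) / real (a - 1 + 1) / fact (a + q)"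
    by (simp only: sum_binomial_fact_shift)
  also have "\<dots> = 1 / real a"
    using assms by (simp add: add.commute)
  finally show ?thesis .
qed

lemma ss_weight_sum_insert:
  assumes "m \<ge> 1"
  shows "(\<Sum>k\<le>p. of_nat (p choose k) * ss_weight (p + m) (Suc k)) = 1 / real m"
proof -
  have "(\<Sum>k\<le>p. of_nat (p choose k) * ss_weight (p + m) (Suc k))
      = (\<Sum>k\<le>p. of_nat (p choose k) * fact k * fact (p + (m - 1) - k)) / fact (p + m)"
    using assms by (simp add: ss_weight_def sum_divide_distrib mult.assoc)
  also have "\<dots> = (\<Sum>k\<le>p. of_nat (p choose k) * fact (m - 1 + k) * fact (p - k)) / fact (p + m)"
    unfolding atMost_atLeast0
    by (subst sum.atLeastAtMost_rev) (auto intro!: sum.cong simp: binomial_symmetric[symmetric] mult.commute)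
  also have "\<dots> = 1 / real m"
    using assms by (simp only: sum_binomial_fact_shift) (simp add: add.commute)
  finally show ?thesis .
qed

lemma shapley_shubik_ge_sum:
  assumes "finite N" and "\<And>R. R \<in> D \<Longrightarrow> R \<subseteq> N \<and> yes_decisive W k R"
  shows "(\<Sum>R\<in>D. ss_weight (card N) (card R)) \<le> shapley_shubik N W k"
  unfolding shapley_shubik_def ss_weight_def
  by (rule sum_mono2) (use assms in auto)

lemma svg_winning_mono:
  assumes "svg N W" and "S \<in> W" and "S \<subseteq> T" and "T \<subseteq> N"
  shows "T \<in> W"
  using assms unfolding svg_def by blast

lemma yes_blocker_decisive_supersets:
  assumes "svg N W" and "S \<in> W" and "b \<in> S" and "yes_blocker W b" and "S \<subseteq> R" and "R \<subseteq> N"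
  shows "yes_decisive W b R"
  using svg_winning_mono[OF assms(1,2,5,6)] assms(3-5)
  unfolding yes_decisive_def yes_blocker_def by auto

lemma no_blocker_decisive_insert:
  assumes "svg N W" and "T \<subseteq> N" and "T \<notin> W" and "b \<in> N - T" and "no_blocker N W b"
    and "U \<subseteq> T"
  shows "yes_decisive W b (insert b U)"
proof -
  have "U \<notin> W"
    using svg_winning_mono[OF assms(1) _ assms(6,2)] assms(3) by blast
  moreover have "insert b U \<in> W"
  proof (rule ccontr)
    assume "insert b U \<notin> W"
    moreover have "insert b U \<subseteq> N"
      using assms(2,4,6) by blast
    ultimately show False
      using assms(5) unfolding no_blocker_def by blast
  qed
  moreover have "insert b U - {b} = U"
    using assms(4,6) by auto
  ultimately show ?thesis
    unfolding yes_decisive_def by simp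
qed

lemma shapley_shubik_yes_blocker:
  assumes "svg N W" and "S \<in> W" and "b \<in> S" and "yes_blocker W b"
  shows "shapley_shubik N W b \<ge> 1 / real (card S)"
proof -
  have fin: "finite N" and SN: "S \<subseteq> N"
    using assms(1,2) unfolding svg_def by auto
  then have fS: "finite S"
    by (rule finite_subset[rotated])
  have S1: "card S \<ge> 1"
    using assms(3) fS by (metis One_nat_def Suc_leI card_gt_0_iff empty_iff)
  have cN: "card N = card S + card (N - S)"
    using fin SN by (simp add: card_Diff_subset[OF fS] card_mono)
  have cU: "card (S \<union> U) = card S + card U" if "U \<in> Pow (N - S)" for U
    using that fin fS by (intro card_Un_disjoint) (auto intro: finite_subset)
  have "1 / real (card S) = (\<Sum>U\<in>Pow (N - S). ss_weight (card N) (card S + card U))"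
    using sum_Pow_card[of "N - S" "\<lambda>k. ss_weight (card N) (card S + k)"] fin
    by (simp add: cN ss_weight_sum_supersets[OF S1])
  also have "\<dots> = (\<Sum>U\<in>Pow (N - S). ss_weight (card N) (card (S \<union> U)))"
    by (simp add: cU)
  also have "\<dots> = (\<Sum>R\<in>(\<union>) S ` Pow (N - S). ss_weight (card N) (card R))"
    by (rule sum.reindex[symmetric, unfolded comp_def]) (auto intro: inj_onI)
  also have "\<dots> \<le> shapley_shubik N W b"
    using fin SN by (intro shapley_shubik_ge_sum) (auto intro!: yes_blocker_decisive_supersets[OF assms])
  finally show ?thesis .
qed

lemma shapley_shubik_no_blocker:
  assumes "svg N W" and "T \<subseteq> N" and "T \<notin> W" and "b \<in> N - T" and "no_blocker N W b"
  shows "shapley_shubik N W b \<ge> 1 / real (card (N - T))"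
proof -
  have fin: "finite N"
    using assms(1) unfolding svg_def by auto
  then have fT: "finite T"
    using assms(2) by (rule finite_subset[rotated])
  have m1: "card (N - T) \<ge> 1"
    using assms(4) fin by (metis One_nat_def Suc_leI card_gt_0_iff empty_iff finite_Diff)
  have cN: "card N = card T + card (N - T)"
    using fin assms(2) by (simp add: card_Diff_subset[OF fT] card_mono)
  have cU: "card (insert b U) = Suc (card U)" if "U \<in> Pow T" for U
    using that fT assms(4) by (subst card_insert_disjoint) (auto intro: finite_subset)
  have "1 / real (card (N - T)) = (\<Sum>U\<in>Pow T. ss_weight (card N) (Suc (card U)))"
    using sum_Pow_card[of T "\<lambda>k. ss_weight (card N) (Suc k)"] fT
    by (simp add: cN ss_weight_sum_insert[OF m1])
  also have "\<dots> = (\<Sum>U\<in>Pow T. ss_weight (card N) (card (insert b U)))"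
    by (simp add: cU)
  also have "\<dots> = (\<Sum>R\<in>insert b ` Pow T. ss_weight (card N) (card R))"
    using assms(4) by (intro sum.reindex[symmetric, unfolded comp_def] inj_onI)
      (metis DiffD2 Diff_insert_absorb PowD subsetD)
  also have "\<dots> \<le> shapley_shubik N W b"
    using fin assms(2,4)
    by (intro shapley_shubik_ge_sum) (auto intro!: no_blocker_decisive_insert[OF assms])
  finally show ?thesis .
qed

theorem theorem5:
  assumes "svg N W"
  shows "(\<forall>S b. S \<in> W \<and> b \<in> S \<and> yes_blocker W b \<longrightarrow>
              shapley_shubik N W b \<ge> 1 / real (card S))
       \<and> (\<forall>T b. T \<subseteq> N \<and> T \<notin> W \<and> b \<in> N - T \<and> no_blocker N W b \<longrightarrow>
              shapley_shubik N W b \<ge> 1 / real (card (N - T)))"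
  using shapley_shubik_yes_blocker[OF assms] shapley_shubik_no_blocker[OF assms] by blast

end
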